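(* Let $S$ be a tree and let $v$ be a vertex of $S$ of degree two, with neighbours $u,w$. Let $T$ be the tree obtained from $S$ by deleting $v$ and adding a new edge joining $u$ and $w$. If $T$ is upright, then $S$ is upright.
   Context: For a graph $G$ and $X\subseteq V(G)$, $D_G(X)$ is the set of edges with one end in $X$ and the other in $V(G)\setminus X$; for $A,B\subseteq V(G)$, $D_G(A,B)$ is the set of edges with one end in $A\setminus B$ and the other in $B\setminus A$. A bias in a graph $S$ is a set $\mathcal B$ of subsets of $V(S)$ such that: every $A\in\mathcal B$ satisfies $A\ne\emptyset, V(S)$; if $A,B\in\mathcal B$ and $D_S(A,B)=\emptyset$ then both $A\cap B$ and $A\cup B$ lie in $\mathcal B\cup\{\emptyset,V(S)\}$; and if $A,B\in\mathcal B$ and $|D_S(A,B)|=1$ then at least one of $A\cap B, A\cup B$ lies in $\mathcal B\cup\{\emptyset,V(S)\}$. A directing of $S$ assigns to each edge one of its ends as head, giving a digraph $S'$; $D^+_{S'}(X)$ is the set of edges with tail in $X$ and head outside $X$, and $D^-_{S'}(X)=D^+_{S'}(V(S)\setminus X)$. A forest $S$ is upright if for every bias $\mathcal B$ in $S$ with $|D_S(X)|\ge 2$ for all $X\in\mathcal B$, there is a directing of $S$, forming a digraph $S'$, such that $D^+_{S'}(X)\ne\emptyset$ and $D^-_{S'}(X)\neq\emptyset$ for all $X\in\mathcal B$. *)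

theory Defs
  imports Main
begin

definition graph :: "'a set \<Rightarrow> 'a set set \<Rightarrow> bool" where
  "graph V E \<longleftrightarrow> finite V \<and> (\<forall>e\<in>E. e \<subseteq> V \<and> card e = 2)"

definition has_cycle :: "'a set \<Rightarrow> 'a set set \<Rightarrow> bool" where
  "has_cycle V E \<longleftrightarrow> (\<exists>xs. length xs \<ge> 3 \<and> distinct xs \<and> set xs \<subseteq> V \<and>
      (\<forall>i < length xs. {xs ! i, xs ! (Suc i mod length xs)} \<in> E))"

definition forest :: "'a set \<Rightarrow> 'a set set \<Rightarrow> bool" where
  "forest V E \<longleftrightarrow> graph V E \<and> \<not> has_cycle V E"

definition connected_graph :: "'a set \<Rightarrow> 'a set set \<Rightarrow> bool" where
  "connected_graph V E \<longleftrightarrow>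
     (\<forall>x\<in>V. \<forall>y\<in>V. (\<lambda>a b. {a, b} \<in> E)\<^sup>*\<^sup>* x y)"

definition tree :: "'a set \<Rightarrow> 'a set set \<Rightarrow> bool" where
  "tree V E \<longleftrightarrow> forest V E \<and> V \<noteq> {} \<and> connected_graph V E"

definition degree :: "'a set set \<Rightarrow> 'a \<Rightarrow> nat" where
  "degree E v = card {e \<in> E. v \<in> e}"

definition cut :: "'a set \<Rightarrow> 'a set set \<Rightarrow> 'a set \<Rightarrow> 'a set set" where
  "cut V E X = {e \<in> E. e \<inter> X \<noteq> {} \<and> e \<inter> (V - X) \<noteq> {}}"

definition cut2 :: "'a set set \<Rightarrow> 'a set \<Rightarrow> 'a set \<Rightarrow> 'a set set" where
  "cut2 E A B = {e \<in> E. e \<inter> (A - B) \<noteq> {} \<and> e \<inter> (B - A) \<noteq> {}}"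

definition bias :: "'a set \<Rightarrow> 'a set set \<Rightarrow> 'a set set \<Rightarrow> bool" where
  "bias V E \<B> \<longleftrightarrow>
     (\<forall>A\<in>\<B>. A \<subseteq> V \<and> A \<noteq> {} \<and> A \<noteq> V) \<and>
     (\<forall>A\<in>\<B>. \<forall>B\<in>\<B>. cut2 E A B = {} \<longrightarrow>
         A \<inter> B \<in> \<B> \<union> {{}, V} \<and> A \<union> B \<in> \<B> \<union> {{}, V}) \<and>
     (\<forall>A\<in>\<B>. \<forall>B\<in>\<B>. card (cut2 E A B) = 1 \<longrightarrow>
         A \<inter> B \<in> \<B> \<union> {{}, V} \<or> A \<union> B \<in> \<B> \<union> {{}, V})"

text \<open>A directing assigns to each edge one of its ends as head.\<close>
definition directing :: "'a set set \<Rightarrow> ('a set \<Rightarrow> 'a) \<Rightarrow> bool" where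
  "directing E h \<longleftrightarrow> (\<forall>e\<in>E. h e \<in> e)"

definition out_edges :: "'a set \<Rightarrow> 'a set set \<Rightarrow> ('a set \<Rightarrow> 'a) \<Rightarrow> 'a set \<Rightarrow> 'a set set" where
  "out_edges V E h X = {e \<in> E. e - {h e} \<subseteq> X \<and> h e \<in> V - X}"

definition in_edges :: "'a set \<Rightarrow> 'a set set \<Rightarrow> ('a set \<Rightarrow> 'a) \<Rightarrow> 'a set \<Rightarrow> 'a set set" where
  "in_edges V E h X = out_edges V E h (V - X)"

definition upright :: "'a set \<Rightarrow> 'a set set \<Rightarrow> bool" where
  "upright V E \<longleftrightarrow> forest V E \<and>
     (\<forall>\<B>. bias V E \<B> \<and> (\<forall>X\<in>\<B>. card (cut V E X) \<ge> 2) \<longrightarrow>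
        (\<exists>h. directing E h \<and>
           (\<forall>X\<in>\<B>. out_edges V E h X \<noteq> {} \<and> in_edges V E h X \<noteq> {})))"

end

theory Submission
  imports Defs
begin

text \<open>Suppressing \<open>v\<close> sends every set \<open>X\<close> of a bias of \<open>S\<close> that does not separate \<open>v\<close>
  from both neighbours to \<open>X - {v}\<close>. This preserves cut sizes, because a crossing of the new
  edge \<open>uw\<close> corresponds to exactly one crossing of \<open>vu\<close> or \<open>vw\<close>, and it preserves the bias
  axioms: when \<open>A \<inter> B\<close> or \<open>A \<union> B\<close> separates \<open>v\<close> from both neighbours, \<open>uw\<close> contributes one
  more crossing to \<open>D(A, B)\<close> in \<open>T\<close> than the two edges at \<open>v\<close> do in \<open>S\<close>. A directing of \<open>T\<close>
  that works for the transferred bias lifts to \<open>S\<close> by directing the path \<open>u v w\<close> like \<open>uw\<close>;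
  the discarded sets are entered and left by this directed path.\<close>

lemma cut2_empty [simp]: "cut2 {} A B = {}"
  by (simp add: cut2_def)

lemma cut2_insert:
  "cut2 (insert e F) A B =
     (if e \<inter> (A - B) \<noteq> {} \<and> e \<inter> (B - A) \<noteq> {} then insert e (cut2 F A B) else cut2 F A B)"
  by (auto simp: cut2_def)

lemma cut2_subset: "cut2 F A B \<subseteq> F"
  by (auto simp: cut2_def)

lemma finite_cut2: "finite F \<Longrightarrow> finite (cut2 F A B)"
  by (rule finite_subset[OF cut2_subset])

lemma cut2_Un: "cut2 (F \<union> G) A B = cut2 F A B \<union> cut2 G A B"
  by (auto simp: cut2_def)

lemma cut2_Diff_vertex: "\<forall>e\<in>F. v \<notin> e \<Longrightarrow> cut2 F (A - {v}) (B - {v}) = cut2 F A B"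
  unfolding cut2_def by blast

lemma cut_eq_cut2: "X \<subseteq> V \<Longrightarrow> cut V E X = cut2 E X (V - X)"
  unfolding cut_def cut2_def by auto

lemma bias_proper: "bias V E \<B> \<Longrightarrow> A \<in> \<B> \<Longrightarrow> A \<subseteq> V \<and> A \<noteq> {} \<and> A \<noteq> V"
  unfolding bias_def by (elim conjE) (rule bspec)

lemma bias_uncrossed:
  assumes "bias V E \<B>" "A \<in> \<B>" "B \<in> \<B>" "cut2 E A B = {}"
  shows "A \<inter> B \<in> \<B> \<union> {{}, V} \<and> A \<union> B \<in> \<B> \<union> {{}, V}"
  using assms(1)[unfolded bias_def, THEN conjunct2, THEN conjunct1] assms(2-4) by blast

lemma bias_crossed_once:
  assumes "bias V E \<B>" "A \<in> \<B>" "B \<in> \<B>" "card (cut2 E A B) = 1"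
  shows "A \<inter> B \<in> \<B> \<union> {{}, V} \<or> A \<union> B \<in> \<B> \<union> {{}, V}"
  using assms(1)[unfolded bias_def, THEN conjunct2, THEN conjunct2] assms(2-4) by blast

lemma graph_finite_edges: "graph V E \<Longrightarrow> finite E"
  unfolding graph_def by (meson Pow_iff finite_Pow_iff finite_subset subsetI)

lemma graph_edge:
  assumes "graph V E" "{a, b} \<in> E"
  shows "a \<noteq> b \<and> a \<in> V \<and> b \<in> V"
proof -
  have "{a, b} \<subseteq> V" "card {a, b} = 2"
    using assms unfolding graph_def by auto
  then show ?thesis
    by (cases "a = b") auto
qed

lemma triangle_has_cycle:
  assumes "{a, b} \<in> E" "{b, c} \<in> E" "{c, a} \<in> E" "distinct [a, b, c]" "{a, b, c} \<subseteq> V"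
  shows "has_cycle V E"
  unfolding has_cycle_def
proof (intro exI conjI allI impI)
  fix i assume "i < length [a, b, c]"
  then have "i = 0 \<or> i = 1 \<or> i = 2"
    by auto
  then show "{[a, b, c] ! i, [a, b, c] ! (Suc i mod length [a, b, c])} \<in> E"
    using assms(1-3) by auto
qed (use assms(4,5) in auto)

lemma edges_at_degree_two:
  assumes "finite E" "degree E v = 2" "{v, u} \<in> E" "{v, w} \<in> E" "u \<noteq> w"
  shows "{e \<in> E. v \<in> e} = {{v, u}, {v, w}}"
proof (rule card_subset_eq[symmetric])
  show "finite {e \<in> E. v \<in> e}"
    using assms(1) by simp
  show "{{v, u}, {v, w}} \<subseteq> {e \<in> E. v \<in> e}"
    using assms(3,4) by simp
  have "{v, u} \<noteq> {v, w}"
    using assms(5) by (auto simp: doubleton_eq_iff)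
  then show "card {{v, u}, {v, w}} = card {e \<in> E. v \<in> e}"
    using assms(2) by (simp add: degree_def)
qed

text \<open>The sets crossed by both edges at \<open>v\<close>: they have no counterpart once \<open>v\<close> is suppressed.\<close>

definition isolates :: "'a \<Rightarrow> 'a \<Rightarrow> 'a \<Rightarrow> 'a set \<Rightarrow> bool" where
  "isolates u v w X \<longleftrightarrow> (v \<in> X \<longleftrightarrow> u \<notin> X) \<and> (v \<in> X \<longleftrightarrow> w \<notin> X)"

lemma not_isolates_Int_or_Un:
  "\<not> isolates u v w A \<Longrightarrow> \<not> isolates u v w B \<Longrightarrow>
     \<not> isolates u v w (A \<inter> B) \<or> \<not> isolates u v w (A \<union> B)"
  unfolding isolates_def by blast

lemma not_isolates_complement:
  "\<not> isolates u v w X \<Longrightarrow> {u, v, w} \<subseteq> V \<Longrightarrow> \<not> isolates u v w (V - X)"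
  unfolding isolates_def by blast

lemma card_cut2_path_eq_edge:
  assumes "u \<noteq> w" "v \<noteq> u" "v \<noteq> w"
    and "\<not> isolates u v w A" "\<not> isolates u v w B"
    and "\<not> isolates u v w (A \<inter> B)" "\<not> isolates u v w (A \<union> B)"
  shows "card (cut2 {{v, u}, {v, w}} A B) = card (cut2 {{u, w}} (A - {v}) (B - {v}))"
  using assms unfolding cut2_insert isolates_def
  by (cases "u \<in> A"; cases "u \<in> B"; cases "v \<in> A"; cases "v \<in> B"; cases "w \<in> A"; cases "w \<in> B")
    (simp_all add: doubleton_eq_iff)

lemma cut2_path_isolating:
  assumes "v \<noteq> u" "v \<noteq> w"
    and "\<not> isolates u v w A" "\<not> isolates u v w B"
    and "isolates u v w (A \<inter> B) \<or> isolates u v w (A \<union> B)"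
  shows "cut2 {{v, u}, {v, w}} A B = {}" and "cut2 {{u, w}} (A - {v}) (B - {v}) = {{u, w}}"
  using assms unfolding cut2_insert isolates_def
  by (cases "u \<in> A"; cases "u \<in> B"; cases "v \<in> A"; cases "v \<in> B"; cases "w \<in> A"; cases "w \<in> B";
      simp add: doubleton_eq_iff)+

locale suppressible_vertex =
  fixes V :: "'a set" and E :: "'a set set" and u v w :: 'a
  assumes graph: "graph V E"
    and v_in_V: "v \<in> V"
    and edges_at_v: "{e \<in> E. v \<in> e} = {{v, u}, {v, w}}"
    and u_neq_w: "u \<noteq> w"
    and uw_notin_E: "{u, w} \<notin> E"
begin

definition other_edges :: "'a set set" where
  "other_edges = E - {{v, u}, {v, w}}"

definition suppressed_edges :: "'a set set" where
  "suppressed_edges = other_edges \<union> {{u, w}}"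

lemma vu_in_E: "{v, u} \<in> E" and vw_in_E: "{v, w} \<in> E"
  using edges_at_v by blast+

lemma v_neq_u: "v \<noteq> u" and v_neq_w: "v \<noteq> w" and u_in_V: "u \<in> V" and w_in_V: "w \<in> V"
  using graph_edge[OF graph vu_in_E] graph_edge[OF graph vw_in_E] by auto

lemma finite_other_edges: "finite other_edges"
  using graph_finite_edges[OF graph] by (simp add: other_edges_def)

lemma v_notin_other_edge: "e \<in> other_edges \<Longrightarrow> v \<notin> e"
  using edges_at_v by (auto simp: other_edges_def)

lemma card_cut2_edges:
  "card (cut2 E A B) = card (cut2 other_edges A B) + card (cut2 {{v, u}, {v, w}} A B)"
proof -
  have "E = other_edges \<union> {{v, u}, {v, w}}"
    using vu_in_E vw_in_E by (auto simp: other_edges_def)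
  then have "cut2 E A B = cut2 other_edges A B \<union> cut2 {{v, u}, {v, w}} A B"
    by (metis cut2_Un)
  moreover have "cut2 other_edges A B \<inter> cut2 {{v, u}, {v, w}} A B = {}"
    using cut2_subset[of other_edges A B] cut2_subset[of "{{v, u}, {v, w}}" A B]
    unfolding other_edges_def by blast
  ultimately show ?thesis
    using finite_other_edges by (simp add: card_Un_disjoint finite_cut2)
qed

lemma card_cut2_suppressed_edges:
  "card (cut2 suppressed_edges (A - {v}) (B - {v})) =
     card (cut2 other_edges A B) + card (cut2 {{u, w}} (A - {v}) (B - {v}))"
proof -
  have "cut2 suppressed_edges (A - {v}) (B - {v}) =
          cut2 other_edges A B \<union> cut2 {{u, w}} (A - {v}) (B - {v})"
    unfolding suppressed_edges_def cut2_Un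
    using v_notin_other_edge cut2_Diff_vertex[of other_edges v A B] by simp
  moreover have "cut2 other_edges A B \<inter> cut2 {{u, w}} (A - {v}) (B - {v}) = {}"
    using cut2_subset[of other_edges A B] cut2_subset[of "{{u, w}}" "A - {v}" "B - {v}"] uw_notin_E
    unfolding other_edges_def by blast
  ultimately show ?thesis
    using finite_other_edges by (simp add: card_Un_disjoint finite_cut2)
qed

lemma card_cut2_suppressed:
  assumes "\<not> isolates u v w A" "\<not> isolates u v w B"
    and "\<not> isolates u v w (A \<inter> B)" "\<not> isolates u v w (A \<union> B)"
  shows "card (cut2 suppressed_edges (A - {v}) (B - {v})) = card (cut2 E A B)"
  using card_cut2_path_eq_edge[OF u_neq_w v_neq_u v_neq_w assms]
  by (simp add: card_cut2_edges card_cut2_suppressed_edges)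

lemma card_cut2_suppressed_isolating:
  assumes "\<not> isolates u v w A" "\<not> isolates u v w B"
    and "isolates u v w (A \<inter> B) \<or> isolates u v w (A \<union> B)"
  shows "card (cut2 suppressed_edges (A - {v}) (B - {v})) = card (cut2 E A B) + 1"
  using cut2_path_isolating[OF v_neq_u v_neq_w assms]
  by (simp add: card_cut2_edges card_cut2_suppressed_edges)

lemma card_cut_suppressed:
  assumes "X \<subseteq> V" "\<not> isolates u v w X"
  shows "card (cut (V - {v}) suppressed_edges (X - {v})) = card (cut V E X)"
proof -
  have "{u, v, w} \<subseteq> V"
    using u_in_V v_in_V w_in_V by blast
  then have "\<not> isolates u v w (V - X)" "\<not> isolates u v w (X \<inter> (V - X))"
      "\<not> isolates u v w (X \<union> (V - X))"
    using assms not_isolates_complement by (auto simp: isolates_def)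
  moreover have "(V - {v}) - (X - {v}) = (V - X) - {v}"
    by blast
  ultimately show ?thesis
    using assms card_cut2_suppressed[of X "V - X"] by (simp add: cut_eq_cut2 Diff_mono)
qed

definition suppressed_bias :: "'a set set \<Rightarrow> 'a set set" where
  "suppressed_bias \<B> = (\<lambda>X. X - {v}) ` {X \<in> \<B>. \<not> isolates u v w X}"

lemma suppressed_nontrivial:
  assumes "X \<subseteq> V" "X \<noteq> {}" "X \<noteq> V" "\<not> isolates u v w X"
  shows "X - {v} \<noteq> {}" and "X - {v} \<noteq> V - {v}"
proof -
  have "X \<noteq> {v}" "X \<noteq> V - {v}"
    using assms(4) u_in_V w_in_V v_neq_u v_neq_w by (auto simp: isolates_def)
  then show "X - {v} \<noteq> {}" "X - {v} \<noteq> V - {v}"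
    using assms(1-3) by auto
qed

lemma suppressed_bias_closure:
  "\<not> isolates u v w X \<Longrightarrow> X \<in> \<B> \<union> {{}, V} \<Longrightarrow> X - {v} \<in> suppressed_bias \<B> \<union> {{}, V - {v}}"
  by (auto simp: suppressed_bias_def)

lemma bias_suppressed:
  assumes "bias V E \<B>"
  shows "bias (V - {v}) suppressed_edges (suppressed_bias \<B>)"
proof -
  let ?E' = suppressed_edges and ?\<B>' = "suppressed_bias \<B>" and ?V' = "V - {v}"
  have empty_cut: "cut2 E A B = {} \<longleftrightarrow> card (cut2 E A B) = 0" for A B
    using graph_finite_edges[OF graph] by (simp add: finite_cut2)
  have proper: "A' \<subseteq> ?V' \<and> A' \<noteq> {} \<and> A' \<noteq> ?V'" if "A' \<in> ?\<B>'" for A'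
  proof -
    obtain A where A: "A \<in> \<B>" "\<not> isolates u v w A" "A' = A - {v}"
      using \<open>A' \<in> ?\<B>'\<close> by (auto simp: suppressed_bias_def)
    moreover have "A \<subseteq> V" "A \<noteq> {}" "A \<noteq> V"
      using bias_proper[OF assms A(1)] by auto
    ultimately show ?thesis
      using suppressed_nontrivial[of A] by auto
  qed
  have uncrossed: "A' \<inter> B' \<in> ?\<B>' \<union> {{}, ?V'} \<and> A' \<union> B' \<in> ?\<B>' \<union> {{}, ?V'}"
      if members: "A' \<in> ?\<B>'" "B' \<in> ?\<B>'" and empty: "cut2 ?E' A' B' = {}" for A' B'
  proof -
    obtain A B where A: "A \<in> \<B>" "\<not> isolates u v w A" "A' = A - {v}"
      and B: "B \<in> \<B>" "\<not> isolates u v w B" "B' = B - {v}"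
      using members by (auto simp: suppressed_bias_def)
    have "card (cut2 ?E' (A - {v}) (B - {v})) = 0"
      using empty A B by simp
    then have "\<not> isolates u v w (A \<inter> B)" "\<not> isolates u v w (A \<union> B)" and "cut2 E A B = {}"
      using card_cut2_suppressed_isolating[OF A(2) B(2)] card_cut2_suppressed[OF A(2) B(2)]
        empty_cut by fastforce+
    moreover have "A' \<inter> B' = (A \<inter> B) - {v}" "A' \<union> B' = (A \<union> B) - {v}"
      using A B by auto
    ultimately show ?thesis
      using bias_uncrossed[OF assms A(1) B(1)] suppressed_bias_closure by metis
  qed
  have crossed_once: "A' \<inter> B' \<in> ?\<B>' \<union> {{}, ?V'} \<or> A' \<union> B' \<in> ?\<B>' \<union> {{}, ?V'}"
      if members: "A' \<in> ?\<B>'" "B' \<in> ?\<B>'" and one: "card (cut2 ?E' A' B') = 1" for A' B'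
  proof -
    obtain A B where A: "A \<in> \<B>" "\<not> isolates u v w A" "A' = A - {v}"
      and B: "B \<in> \<B>" "\<not> isolates u v w B" "B' = B - {v}"
      using members by (auto simp: suppressed_bias_def)
    have meet_join: "A' \<inter> B' = (A \<inter> B) - {v}" "A' \<union> B' = (A \<union> B) - {v}"
      using A B by auto
    show ?thesis
    proof (cases "isolates u v w (A \<inter> B) \<or> isolates u v w (A \<union> B)")
      case True
      then have "cut2 E A B = {}"
        using one A B card_cut2_suppressed_isolating[OF A(2) B(2)] empty_cut by simp
      with True show ?thesis
        using not_isolates_Int_or_Un[OF A(2) B(2)] bias_uncrossed[OF assms A(1) B(1)]
          suppressed_bias_closure meet_join by metis
    next
      case False
      then have "card (cut2 E A B) = 1"
        using one A B card_cut2_suppressed[OF A(2) B(2)] by simp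
      with False show ?thesis
        using bias_crossed_once[OF assms A(1) B(1)] suppressed_bias_closure meet_join by metis
    qed
  qed
  show ?thesis
    unfolding bias_def
  proof (intro conjI)
    show "\<forall>A\<in>?\<B>'. A \<subseteq> ?V' \<and> A \<noteq> {} \<and> A \<noteq> ?V'"
      using proper by blast
    show "\<forall>A\<in>?\<B>'. \<forall>B\<in>?\<B>'. cut2 ?E' A B = {} \<longrightarrow>
        A \<inter> B \<in> ?\<B>' \<union> {{}, ?V'} \<and> A \<union> B \<in> ?\<B>' \<union> {{}, ?V'}"
      using uncrossed by blast
    show "\<forall>A\<in>?\<B>'. \<forall>B\<in>?\<B>'. card (cut2 ?E' A B) = 1 \<longrightarrow>
        A \<inter> B \<in> ?\<B>' \<union> {{}, ?V'} \<or> A \<union> B \<in> ?\<B>' \<union> {{}, ?V'}"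
      using crossed_once by blast
  qed
qed

text \<open>The edge \<open>uw\<close>, directed by \<open>h'\<close>, becomes the path \<open>u v w\<close> directed the same way.\<close>

definition subdivided_directing :: "('a set \<Rightarrow> 'a) \<Rightarrow> 'a set \<Rightarrow> 'a" where
  "subdivided_directing h' e =
     (if e = {v, u} then (if h' {u, w} = w then v else u)
      else if e = {v, w} then (if h' {u, w} = w then w else v)
      else h' e)"

lemma subdivided_directing_vu: "subdivided_directing h' {v, u} = (if h' {u, w} = w then v else u)"
  and subdivided_directing_vw: "subdivided_directing h' {v, w} = (if h' {u, w} = w then w else v)"
  and subdivided_directing_other: "e \<in> other_edges \<Longrightarrow> subdivided_directing h' e = h' e"
  using u_neq_w v_neq_u by (auto simp: subdivided_directing_def other_edges_def doubleton_eq_iff)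

lemma head_uw: "directing suppressed_edges h' \<Longrightarrow> h' {u, w} = u \<or> h' {u, w} = w"
  by (auto simp: directing_def suppressed_edges_def)

lemma directing_subdivided:
  assumes "directing suppressed_edges h'"
  shows "directing E (subdivided_directing h')"
  unfolding directing_def
proof
  fix e assume "e \<in> E"
  then consider "e \<in> other_edges" | "e = {v, u}" | "e = {v, w}"
    by (auto simp: other_edges_def)
  then show "subdivided_directing h' e \<in> e"
    using assms subdivided_directing_vu subdivided_directing_vw subdivided_directing_other
    by cases (auto simp: directing_def suppressed_edges_def)
qed

lemma out_edges_subdivided:
  assumes "directing suppressed_edges h'" "out_edges (V - {v}) suppressed_edges h' (X - {v}) \<noteq> {}"
  shows "out_edges V E (subdivided_directing h') X \<noteq> {}"
proof -
  let ?h = "subdivided_directing h'"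
  obtain e where "e \<in> suppressed_edges" and tail: "e - {h' e} \<subseteq> X - {v}"
    and head: "h' e \<in> (V - {v}) - (X - {v})"
    using assms(2) unfolding out_edges_def by auto
  then consider "e \<in> other_edges" | "e = {u, w}"
    by (auto simp: suppressed_edges_def)
  then show ?thesis
  proof cases
    case 1
    then have "e \<in> out_edges V E ?h X"
      using tail head subdivided_directing_other[OF 1] by (auto simp: out_edges_def other_edges_def)
    then show ?thesis by auto
  next
    case 2
    then have "{v, u} \<in> out_edges V E ?h X \<or> {v, w} \<in> out_edges V E ?h X"
      using head_uw[OF assms(1)] tail head vu_in_E vw_in_E v_neq_u v_neq_w u_neq_w v_in_V
        subdivided_directing_vu subdivided_directing_vw
      by (cases "v \<in> X") (auto simp: out_edges_def)
    then show ?thesis by auto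
  qed
qed

lemma isolating_bidirected:
  assumes "directing suppressed_edges h'" "isolates u v w X"
  shows "out_edges V E (subdivided_directing h') X \<noteq> {}"
    and "in_edges V E (subdivided_directing h') X \<noteq> {}"
proof -
  let ?h = "subdivided_directing h'"
  have "({v, u} \<in> out_edges V E ?h X \<or> {v, w} \<in> out_edges V E ?h X) \<and>
        ({v, u} \<in> out_edges V E ?h (V - X) \<or> {v, w} \<in> out_edges V E ?h (V - X))"
    using assms head_uw[OF assms(1)] vu_in_E vw_in_E v_neq_u v_neq_w u_neq_w v_in_V u_in_V w_in_V
      subdivided_directing_vu subdivided_directing_vw
    by (auto simp: out_edges_def isolates_def)
  then show "out_edges V E ?h X \<noteq> {}" "in_edges V E ?h X \<noteq> {}"
    unfolding in_edges_def by auto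
qed

lemma bidirected_subdivided:
  assumes "directing suppressed_edges h'"
    and bidirected: "\<forall>X\<in>suppressed_bias \<B>. out_edges (V - {v}) suppressed_edges h' X \<noteq> {} \<and>
                                        in_edges (V - {v}) suppressed_edges h' X \<noteq> {}"
    and "X \<in> \<B>"
  shows "out_edges V E (subdivided_directing h') X \<noteq> {} \<and> in_edges V E (subdivided_directing h') X \<noteq> {}"
proof (cases "isolates u v w X")
  case True
  then show ?thesis
    using isolating_bidirected[OF assms(1)] by blast
next
  case False
  then have "X - {v} \<in> suppressed_bias \<B>"
    using assms(3) by (auto simp: suppressed_bias_def)
  moreover have "(V - {v}) - (X - {v}) = (V - X) - {v}"
    by blast
  ultimately have "out_edges (V - {v}) suppressed_edges h' (X - {v}) \<noteq> {}"
      "out_edges (V - {v}) suppressed_edges h' ((V - X) - {v}) \<noteq> {}"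
    using bidirected unfolding in_edges_def by auto
  then show ?thesis
    using out_edges_subdivided[OF assms(1)] unfolding in_edges_def by blast
qed

theorem upright_if_suppressed_upright:
  assumes "forest V E" and upright: "upright (V - {v}) suppressed_edges"
  shows "upright V E"
  unfolding upright_def
proof (intro conjI allI impI)
  fix \<B> assume "bias V E \<B> \<and> (\<forall>X\<in>\<B>. 2 \<le> card (cut V E X))"
  then have bias: "bias V E \<B>" and wide: "\<forall>X\<in>\<B>. 2 \<le> card (cut V E X)"
    by auto
  have "\<forall>X'\<in>suppressed_bias \<B>. 2 \<le> card (cut (V - {v}) suppressed_edges X')"
    using wide bias_proper[OF bias] card_cut_suppressed by (auto simp: suppressed_bias_def)
  then obtain h' where h': "directing suppressed_edges h'"
    and bidirected: "\<forall>X\<in>suppressed_bias \<B>. out_edges (V - {v}) suppressed_edges h' X \<noteq> {} \<and>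
                                        in_edges (V - {v}) suppressed_edges h' X \<noteq> {}"
    using upright bias_suppressed[OF bias] unfolding upright_def by blast
  show "\<exists>h. directing E h \<and> (\<forall>X\<in>\<B>. out_edges V E h X \<noteq> {} \<and> in_edges V E h X \<noteq> {})"
    using directing_subdivided[OF h'] bidirected_subdivided[OF h' bidirected] by blast
qed (fact assms(1))

end

theorem mainTheorem3:
  fixes V :: "'a set" and E :: "'a set set" and u v w :: 'a
  assumes "tree V E"
    and "v \<in> V"
    and "degree E v = 2"
    and "{v, u} \<in> E" and "{v, w} \<in> E" and "u \<noteq> w"
    and "upright (V - {v}) ((E - {{v, u}, {v, w}}) \<union> {{u, w}})"
  shows "upright V E"
proof -
  have forest: "forest V E" and graph: "graph V E" and acyclic: "\<not> has_cycle V E"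
    using assms(1) by (auto simp: tree_def forest_def)
  have "{u, w} \<notin> E"
  proof
    assume uw: "{u, w} \<in> E"
    have wv: "{w, v} \<in> E"
      using assms(5) by (simp add: insert_commute)
    have "distinct [v, u, w]" "{v, u, w} \<subseteq> V"
      using graph_edge[OF graph assms(4)] graph_edge[OF graph assms(5)] assms(6) by auto
    with acyclic show False
      using triangle_has_cycle[OF assms(4) uw wv] by blast
  qed
  moreover have "{e \<in> E. v \<in> e} = {{v, u}, {v, w}}"
    by (rule edges_at_degree_two[OF graph_finite_edges[OF graph] assms(3-6)])
  ultimately interpret suppressible_vertex V E u v w
    using graph assms(2,6) by unfold_locales
  show ?thesis
    using upright_if_suppressed_upright[OF forest] assms(7)
    by (simp add: suppressed_edges_def other_edges_def)
qed

end
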